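(* For any instance of the data described in the context, $\hat{\mathcal A}_M\supseteq\hat{\mathcal A}^*_{SOCP}$, where $\hat{\cdot}$ denotes projection onto the coordinates $(p^g,q^g)$.
   Context: Data: finite bus set $\mathcal B$, line set $\mathcal L$ (unordered pairs of distinct buses; variables $c_{ij},s_{ij}$ indexed by ordered pairs with $\{i,j\}\in\mathcal L$), $\delta(i)$ the neighbors of $i$, generator set $\mathcal G\subseteq\mathcal B$, reals $G_{ij},B_{ij}$ (lines), $G_{ii},B_{ii}$ (buses), demands $p_i^d,q_i^d$, voltage bounds $0\le\underline V_i\le\overline V_i$, generator bounds $p_i^{\min}\le p_i^{\max}$, $q_i^{\min}\le q_i^{\max}$ ($i\in\mathcal G$). Variables $p_i^g,q_i^g$ for $i\in\mathcal G$, with $p_i^g=q_i^g=0$ for $i\notin\mathcal G$. (ALT): $p_i^g-p_i^d=G_{ii}c_{ii}+\sum_{j\in\delta(i)}(G_{ij}c_{ij}-B_{ij}s_{ij})$, $q_i^g-q_i^d=-B_{ii}c_{ii}+\sum_{j\in\delta(i)}(-B_{ij}c_{ij}-G_{ij}s_{ij})$, $\underline V_i^2\le c_{ii}\le\overline V_i^2$ ($i\in\mathcal B$); $c_{ij}=c_{ji}$, $s_{ij}=-s_{ji}$ (lines); $p_i^{\min}\le p_i^g\le p_i^{\max}$, $q_i^{\min}\le q_i^g\le q_i^{\max}$ ($i\in\mathcal G$). McCormick envelope: for $x\in[\underline x,\overline x]$, $y\in[\underline y,\overline y]$, $M(w=xy)$ denotes $\max\{\underline yx+\underline xy-\underline x\underline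 y,\ \overline yx+\overline xy-\overline x\overline y\}\le w\le\min\{\underline yx+\overline xy-\overline x\underline y,\ \overline yx+\underline xy-\underline x\overline y\}$. $\mathcal A_M$: set of $(p^g,q^g,c,s,C,S,D)$ satisfying (ALT) and, for each line, $C_{ij}+S_{ij}=D_{ij}$, $-\overline V_i\overline V_j\le c_{ij},s_{ij}\le\overline V_i\overline V_j$, $M(C_{ij}=c_{ij}^2)$ and $M(S_{ij}=s_{ij}^2)$ with bounds $[-\overline V_i\overline V_j,\overline V_i\overline V_j]$, $M(D_{ij}=c_{ii}c_{jj})$ with bounds $[\underline V_i^2,\overline V_i^2]$, $[\underline V_j^2,\overline V_j^2]$, and $C_{ij},S_{ij}\ge0$. $\mathcal A^*_{SOCP}$: set of $(p^g,q^g,c,s)$ satisfying (ALT) and $c_{ij}^2+s_{ij}^2\le c_{ii}c_{jj}$ for each line. *)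

theory Defs
  imports Complex_Main
begin

record 'b opf_data =
  buses :: "'b set"
  lines :: "'b set set"
  gens  :: "'b set"
  Gl :: "'b set \<Rightarrow> real"
  Bl :: "'b set \<Rightarrow> real"
  Gb :: "'b \<Rightarrow> real"
  Bb :: "'b \<Rightarrow> real"
  pd :: "'b \<Rightarrow> real"
  qd :: "'b \<Rightarrow> real"
  Vmin :: "'b \<Rightarrow> real"
  Vmax :: "'b \<Rightarrow> real"
  pmin :: "'b \<Rightarrow> real"
  pmax :: "'b \<Rightarrow> real"
  qmin :: "'b \<Rightarrow> real"
  qmax :: "'b \<Rightarrow> real"

definition wf_data :: "'b opf_data \<Rightarrow> bool" where
  "wf_data d \<longleftrightarrow>
     finite (buses d) \<and>
     lines d \<subseteq> {{i, j} | i j. i \<in> buses d \<and> j \<in> buses d \<and> i \<noteq> j} \<and>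
     gens d \<subseteq> buses d \<and>
     (\<forall>i\<in>buses d. 0 \<le> Vmin d i \<and> Vmin d i \<le> Vmax d i) \<and>
     (\<forall>i\<in>gens d. pmin d i \<le> pmax d i \<and> qmin d i \<le> qmax d i)"

definition nbrs :: "'b opf_data \<Rightarrow> 'b \<Rightarrow> 'b set" where
  "nbrs d i = {j. {i, j} \<in> lines d}"

definition ALT :: "'b opf_data \<Rightarrow> ('b \<Rightarrow> real) \<Rightarrow> ('b \<Rightarrow> real) \<Rightarrow>
    ('b \<Rightarrow> 'b \<Rightarrow> real) \<Rightarrow> ('b \<Rightarrow> 'b \<Rightarrow> real) \<Rightarrow> bool" where
  "ALT d pg qg c s \<longleftrightarrow>
     (\<forall>i\<in>buses d.
        pg i - pd d i = Gb d i * c i i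
           + (\<Sum>j\<in>nbrs d i. Gl d {i, j} * c i j - Bl d {i, j} * s i j) \<and>
        qg i - qd d i = - Bb d i * c i i
           + (\<Sum>j\<in>nbrs d i. - Bl d {i, j} * c i j - Gl d {i, j} * s i j) \<and>
        (Vmin d i)\<^sup>2 \<le> c i i \<and> c i i \<le> (Vmax d i)\<^sup>2) \<and>
     (\<forall>i j. {i, j} \<in> lines d \<longrightarrow> c i j = c j i \<and> s i j = - s j i) \<and>
     (\<forall>i\<in>gens d. pmin d i \<le> pg i \<and> pg i \<le> pmax d i \<and>
                  qmin d i \<le> qg i \<and> qg i \<le> qmax d i) \<and>
     (\<forall>i\<in>buses d - gens d. pg i = 0 \<and> qg i = 0)"

definition mccormick :: "real \<Rightarrow> real \<Rightarrow> real \<Rightarrow> real \<Rightarrow> real \<Rightarrow> real \<Rightarrow> real \<Rightarrow> bool" where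
  "mccormick x xl xu y yl yu w \<longleftrightarrow>
     max (yl * x + xl * y - xl * yl) (yu * x + xu * y - xu * yu) \<le> w \<and>
     w \<le> min (yl * x + xu * y - xu * yl) (yu * x + xl * y - xl * yu)"

definition A_M :: "'b opf_data \<Rightarrow> (('b \<Rightarrow> real) \<times> ('b \<Rightarrow> real) \<times>
    ('b \<Rightarrow> 'b \<Rightarrow> real) \<times> ('b \<Rightarrow> 'b \<Rightarrow> real) \<times>
    ('b \<Rightarrow> 'b \<Rightarrow> real) \<times> ('b \<Rightarrow> 'b \<Rightarrow> real) \<times> ('b \<Rightarrow> 'b \<Rightarrow> real)) set" where
  "A_M d = {(pg, qg, c, s, C, S, D). ALT d pg qg c s \<and>
     (\<forall>i j. {i, j} \<in> lines d \<longrightarrow>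
        (let V = Vmax d i * Vmax d j in
          C i j + S i j = D i j \<and>
          - V \<le> c i j \<and> c i j \<le> V \<and> - V \<le> s i j \<and> s i j \<le> V \<and>
          mccormick (c i j) (- V) V (c i j) (- V) V (C i j) \<and>
          mccormick (s i j) (- V) V (s i j) (- V) V (S i j) \<and>
          mccormick (c i i) ((Vmin d i)\<^sup>2) ((Vmax d i)\<^sup>2)
                    (c j j) ((Vmin d j)\<^sup>2) ((Vmax d j)\<^sup>2) (D i j) \<and>
          0 \<le> C i j \<and> 0 \<le> S i j))}"

definition A_SOCP :: "'b opf_data \<Rightarrow> (('b \<Rightarrow> real) \<times> ('b \<Rightarrow> real) \<times>
    ('b \<Rightarrow> 'b \<Rightarrow> real) \<times> ('b \<Rightarrow> 'b \<Rightarrow> real)) set" where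
  "A_SOCP d = {(pg, qg, c, s). ALT d pg qg c s \<and>
     (\<forall>i j. {i, j} \<in> lines d \<longrightarrow> (c i j)\<^sup>2 + (s i j)\<^sup>2 \<le> c i i * c j j)}"

definition proj_pq :: "('p \<times> 'q \<times> 'r) set \<Rightarrow> ('p \<times> 'q) set" where
  "proj_pq A = (\<lambda>(p, q, _). (p, q)) ` A"

end

theory Submission
  imports Defs
begin

text \<open>Given an SOCP point, keep \<open>p\<^sup>g, q\<^sup>g, c, s\<close> and put \<open>D\<^sub>i\<^sub>j = c\<^sub>i\<^sub>i c\<^sub>j\<^sub>j\<close>, which lies in
  its McCormick envelope like any product of boxed factors. The cone constraint
  \<open>c\<^sub>i\<^sub>j\<^sup>2 + s\<^sub>i\<^sub>j\<^sup>2 \<le> D\<^sub>i\<^sub>j \<le> V\<^sup>2\<close> leaves room to split \<open>D\<^sub>i\<^sub>j = C\<^sub>i\<^sub>j + S\<^sub>i\<^sub>j\<close> with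
  \<open>c\<^sub>i\<^sub>j\<^sup>2 \<le> C\<^sub>i\<^sub>j \<le> V\<^sup>2\<close> and \<open>s\<^sub>i\<^sub>j\<^sup>2 \<le> S\<^sub>i\<^sub>j \<le> V\<^sup>2\<close>; and over the symmetric box \<open>[-V, V]\<close>
  the McCormick envelope of \<open>x\<^sup>2\<close> contains the whole band \<open>x\<^sup>2 \<le> w \<le> V\<^sup>2\<close>.\<close>

lemma mccormick_square:
  fixes x w V :: real
  assumes "x\<^sup>2 \<le> w" "w \<le> V\<^sup>2"
  shows "mccormick x (- V) V x (- V) V w"
proof -
  have "0 \<le> (V - x)\<^sup>2" "0 \<le> (V + x)\<^sup>2" by simp_all
  then show ?thesis using assms unfolding mccormick_def
    by (simp add: power2_eq_square algebra_simps)
qed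

lemma mccormick_mult:
  fixes x y a A b B :: real
  assumes "a \<le> x" "x \<le> A" "b \<le> y" "y \<le> B"
  shows "mccormick x a A y b B (x * y)"
proof -
  have "0 \<le> (x - a) * (y - b)" "0 \<le> (A - x) * (B - y)"
       "0 \<le> (A - x) * (y - b)" "0 \<le> (x - a) * (B - y)"
    using assms by simp_all
  then show ?thesis unfolding mccormick_def by (simp add: algebra_simps)
qed

lemma sum_squares_split:
  fixes a b P U :: real
  assumes "a\<^sup>2 + b\<^sup>2 \<le> P" "P \<le> U"
  defines "C \<equiv> min U (P - b\<^sup>2)"
  shows "a\<^sup>2 \<le> C" "C \<le> U" "b\<^sup>2 \<le> P - C" "P - C \<le> U"
  using assms unfolding C_def min_def by (smt (verit) zero_le_power2)+

lemma mccormick_line_of_socp: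
  fixes cii cjj cij sij li ui lj uj :: real
  assumes "0 \<le> ui" "0 \<le> uj"
    and "li\<^sup>2 \<le> cii" "cii \<le> ui\<^sup>2" "lj\<^sup>2 \<le> cjj" "cjj \<le> uj\<^sup>2"
    and cone: "cij\<^sup>2 + sij\<^sup>2 \<le> cii * cjj"
  defines "V \<equiv> ui * uj"
  defines "C \<equiv> min (V\<^sup>2) (cii * cjj - sij\<^sup>2)"
  shows "- V \<le> cij \<and> cij \<le> V \<and> - V \<le> sij \<and> sij \<le> V \<and>
    mccormick cij (- V) V cij (- V) V C \<and>
    mccormick sij (- V) V sij (- V) V (cii * cjj - C) \<and>
    mccormick cii (li\<^sup>2) (ui\<^sup>2) cjj (lj\<^sup>2) (uj\<^sup>2) (cii * cjj) \<and>
    0 \<le> C \<and> 0 \<le> cii * cjj - C"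
proof -
  have "0 \<le> cii" "0 \<le> cjj"
    using assms(3,5) zero_le_power2 order_trans by blast+
  then have product_le: "cii * cjj \<le> V\<^sup>2"
    unfolding V_def power_mult_distrib using assms(4,6) by (simp add: mult_mono)
  note split = sum_squares_split[OF cone product_le, folded C_def]
  have "cij\<^sup>2 \<le> V\<^sup>2" "sij\<^sup>2 \<le> V\<^sup>2"
    using split by linarith+
  moreover have "0 \<le> V" unfolding V_def using assms(1,2) by simp
  ultimately have "\<bar>cij\<bar> \<le> V" "\<bar>sij\<bar> \<le> V"
    by (metis abs_of_nonneg power2_le_imp_le power2_abs)+
  moreover have "0 \<le> C" "0 \<le> cii * cjj - C"
    using split zero_le_power2 order_trans by blast+
  ultimately show ?thesis
    using split assms(3-6) by (auto intro: mccormick_square mccormick_mult)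
qed

lemma wf_data_line_buses:
  assumes "wf_data d" "{i, j} \<in> lines d"
  shows "i \<in> buses d" "j \<in> buses d"
  using assms unfolding wf_data_def by (auto simp: doubleton_eq_iff)

theorem proposition2:
  fixes d :: "'b opf_data"
  assumes "wf_data d"
  shows "proj_pq (A_SOCP d) \<subseteq> proj_pq (A_M d)"
proof
  fix z assume "z \<in> proj_pq (A_SOCP d)"
  then obtain pg qg c s where z: "z = (pg, qg)" and alt: "ALT d pg qg c s"
    and cone: "\<And>i j. {i, j} \<in> lines d \<Longrightarrow> (c i j)\<^sup>2 + (s i j)\<^sup>2 \<le> c i i * c j j"
    unfolding proj_pq_def A_SOCP_def by auto
  define D where "D = (\<lambda>i j. c i i * c j j)"
  define C where "C = (\<lambda>i j. min ((Vmax d i * Vmax d j)\<^sup>2) (D i j - (s i j)\<^sup>2))"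
  define S where "S = (\<lambda>i j. D i j - C i j)"
  have "(pg, qg, c, s, C, S, D) \<in> A_M d"
    unfolding A_M_def
  proof (clarsimp simp: alt Let_def, goal_cases)
    case (1 i j)
    note line = \<open>{i, j} \<in> lines d\<close>
    have "0 \<le> Vmax d i" "0 \<le> Vmax d j"
      using assms wf_data_line_buses[OF assms line] unfolding wf_data_def by force+
    moreover have "(Vmin d i)\<^sup>2 \<le> c i i" "c i i \<le> (Vmax d i)\<^sup>2"
      "(Vmin d j)\<^sup>2 \<le> c j j" "c j j \<le> (Vmax d j)\<^sup>2"
      using alt wf_data_line_buses[OF assms line] unfolding ALT_def by auto
    ultimately show ?case
      using mccormick_line_of_socp[OF _ _ _ _ _ _ cone[OF line]]
      unfolding S_def C_def D_def by simp
  qed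
  then show "z \<in> proj_pq (A_M d)" unfolding proj_pq_def z by force
qed

end
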